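(* The regularly locally finitely presentable modules are dense, with respect to the interleaving distance, in the space of (isomorphism classes of) q-tame upper semicontinuous $n$-parameter persistence modules.
   Context: Fix a field $\mathbb{k}$. An $n$-parameter persistence module is a functor $V:\mathbf{R}^n\to\mathbf{Vect}_{\mathbb{k}}$ ($\mathbf{R}^n$ with componentwise order), structure maps $V_{s,t}$. Write $s\ll t$ if $s_i<t_i$ for all $i$; $s+\varepsilon$ adds $\varepsilon$ to each coordinate. $V$ is q-tame if $V_{s,t}$ has finite rank whenever $s\ll t$; upper semicontinuous if $V_s\to\lim_{\varepsilon>0}V_{s+\varepsilon}$ is an isomorphism for all $s$; pointwise finite-dimensional if every $V_s$ is finite-dimensional. Shifts $V[\varepsilon]_s=V_{s+\varepsilon}$, $\eta_\varepsilon:V\to V[\varepsilon]$ the structure maps; an $\varepsilon$-interleaving is $f:V\to W[\varepsilon]$, $g:W\to V[\varepsilon]$ with $g[\varepsilon]f=\eta_{2\varepsilon}$, $f[\varepsilon]g=\eta_{2\varepsilon}$, and $d_I$ is the infimal such $\varepsilon$. For $\varepsilon>0$ and the regular grid $\mathbf{Q}=(\varepsilon\mathbb{Z})^n$, the restriction-extension $V_{\mathbf{Q}}$ is the module with $(V_{\mathbf{Q}})_s=V_{\sup\{p\in\mathbf{Q}:p\le s\}}$ (componentwise rounding down to $\varepsilon\mathbb{Z}$), with structure maps induced from $V$. A q-tame upper semicontinuous module $V$ is regularly locally finitely presentable if it is pointwise finite-dimensional and $V\cong V_{\mathbf{Q}}$ for some regular grid $\mathbf{Q}=(\varepsilon\mathbb{Z})^n$,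 $\varepsilon>0$. *)

theory Defs
  imports "HOL-Analysis.Analysis"
begin

text \<open>
A persistence module over a field 'k, indexed by R^n = real^'n (componentwise
order), is represented inside an ambient k-vector space 'v (scalar multiplication sc):
  V :: real^'n => 'v set   gives the spaces V_s (subspaces of the ambient space),
  phi :: real^'n => real^'n => 'v => 'v   gives the structure maps V_{s,t} (only their
  restriction to V_s matters).
\<close>

definition lin_on :: "('k::field \<Rightarrow> 'v::ab_group_add \<Rightarrow> 'v) \<Rightarrow> ('k \<Rightarrow> 'w::ab_group_add \<Rightarrow> 'w)
    \<Rightarrow> 'v set \<Rightarrow> ('v \<Rightarrow> 'w) \<Rightarrow> bool" where
  "lin_on sc sc' S f \<longleftrightarrow>
     (\<forall>x\<in>S. \<forall>y\<in>S. f (x + y) = f x + f y) \<and> (\<forall>c. \<forall>x\<in>S. f (sc c x) = sc' c (f x))"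

definition fin_dim :: "('k::field \<Rightarrow> 'v::ab_group_add \<Rightarrow> 'v) \<Rightarrow> 'v set \<Rightarrow> bool" where
  "fin_dim sc S \<longleftrightarrow> (\<exists>B. finite B \<and> B \<subseteq> S \<and> module.span sc B = S)"

definition shift_pt :: "real^'n \<Rightarrow> real \<Rightarrow> real^'n" where
  "shift_pt s e = s + (\<chi> i. e)"

definition ll :: "real^'n \<Rightarrow> real^'n \<Rightarrow> bool" where
  "ll s t \<longleftrightarrow> (\<forall>i. s $ i < t $ i)"

definition pmod :: "('k::field \<Rightarrow> 'v::ab_group_add \<Rightarrow> 'v) \<Rightarrow> (real^'n \<Rightarrow> 'v set)
    \<Rightarrow> (real^'n \<Rightarrow> real^'n \<Rightarrow> 'v \<Rightarrow> 'v) \<Rightarrow> bool" where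
  "pmod sc V phi \<longleftrightarrow>
     (\<forall>s. module.subspace sc (V s)) \<and>
     (\<forall>s t. s \<le> t \<longrightarrow> lin_on sc sc (V s) (phi s t) \<and> phi s t ` V s \<subseteq> V t) \<and>
     (\<forall>s. \<forall>x\<in>V s. phi s s x = x) \<and>
     (\<forall>s t u. s \<le> t \<longrightarrow> t \<le> u \<longrightarrow> (\<forall>x\<in>V s. phi t u (phi s t x) = phi s u x))"

definition pmod_hom :: "('k::field \<Rightarrow> 'v::ab_group_add \<Rightarrow> 'v) \<Rightarrow> (real^'n \<Rightarrow> 'v set)
    \<Rightarrow> (real^'n \<Rightarrow> real^'n \<Rightarrow> 'v \<Rightarrow> 'v)
    \<Rightarrow> ('k \<Rightarrow> 'w::ab_group_add \<Rightarrow> 'w) \<Rightarrow> (real^'n \<Rightarrow> 'w set)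
    \<Rightarrow> (real^'n \<Rightarrow> real^'n \<Rightarrow> 'w \<Rightarrow> 'w) \<Rightarrow> (real^'n \<Rightarrow> 'v \<Rightarrow> 'w) \<Rightarrow> bool" where
  "pmod_hom sc V phi sc' W psi h \<longleftrightarrow>
     (\<forall>s. lin_on sc sc' (V s) (h s) \<and> h s ` V s \<subseteq> W s) \<and>
     (\<forall>s t. s \<le> t \<longrightarrow> (\<forall>x\<in>V s. h t (phi s t x) = psi s t (h s x)))"

definition pmod_iso :: "('k::field \<Rightarrow> 'v::ab_group_add \<Rightarrow> 'v) \<Rightarrow> (real^'n \<Rightarrow> 'v set)
    \<Rightarrow> (real^'n \<Rightarrow> real^'n \<Rightarrow> 'v \<Rightarrow> 'v)
    \<Rightarrow> ('k \<Rightarrow> 'w::ab_group_add \<Rightarrow> 'w) \<Rightarrow> (real^'n \<Rightarrow> 'w set)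
    \<Rightarrow> (real^'n \<Rightarrow> real^'n \<Rightarrow> 'w \<Rightarrow> 'w) \<Rightarrow> bool" where
  "pmod_iso sc V phi sc' W psi \<longleftrightarrow>
     (\<exists>h. pmod_hom sc V phi sc' W psi h \<and> (\<forall>s. bij_betw (h s) (V s) (W s)))"

definition shift_sp :: "(real^'n \<Rightarrow> 'v set) \<Rightarrow> real \<Rightarrow> real^'n \<Rightarrow> 'v set" where
  "shift_sp V e s = V (shift_pt s e)"

definition shift_map :: "(real^'n \<Rightarrow> real^'n \<Rightarrow> 'v \<Rightarrow> 'v) \<Rightarrow> real \<Rightarrow> real^'n \<Rightarrow> real^'n \<Rightarrow> 'v \<Rightarrow> 'v" where
  "shift_map phi e s t = phi (shift_pt s e) (shift_pt t e)"

definition q_tame :: "('k::field \<Rightarrow> 'v::ab_group_add \<Rightarrow> 'v) \<Rightarrow> (real^'n \<Rightarrow> 'v set)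
    \<Rightarrow> (real^'n \<Rightarrow> real^'n \<Rightarrow> 'v \<Rightarrow> 'v) \<Rightarrow> bool" where
  "q_tame sc V phi \<longleftrightarrow> (\<forall>s t. ll s t \<longrightarrow> fin_dim sc (phi s t ` V s))"

definition pw_fin_dim :: "('k::field \<Rightarrow> 'v::ab_group_add \<Rightarrow> 'v) \<Rightarrow> (real^'n \<Rightarrow> 'v set) \<Rightarrow> bool" where
  "pw_fin_dim sc V \<longleftrightarrow> (\<forall>s. fin_dim sc (V s))"

text \<open>The limit lim_{e>0} V_{s+e} in Vect, constructed as the space of compatible families
  (x_e)_{e>0}, x_e in V_{s+e}, with V_{s+e,s+e'}(x_e) = x_e' for e <= e'
  (families are extended by 0 for e <= 0).\<close>
definition usc_limit :: "(real^'n \<Rightarrow> 'v::zero set) \<Rightarrow> (real^'n \<Rightarrow> real^'n \<Rightarrow> 'v \<Rightarrow> 'v)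
    \<Rightarrow> real^'n \<Rightarrow> (real \<Rightarrow> 'v) set" where
  "usc_limit V phi s = {x. (\<forall>e. e \<le> 0 \<longrightarrow> x e = 0) \<and> (\<forall>e>0. x e \<in> V (shift_pt s e)) \<and>
       (\<forall>e e'. 0 < e \<longrightarrow> e \<le> e' \<longrightarrow> phi (shift_pt s e) (shift_pt s e') (x e) = x e')}"

text \<open>upper semicontinuous: the canonical map V_s -> lim_{e>0} V_{s+e} is an isomorphism
  (it is linear, so being an isomorphism means being bijective)\<close>
definition usc :: "(real^'n \<Rightarrow> 'v::zero set) \<Rightarrow> (real^'n \<Rightarrow> real^'n \<Rightarrow> 'v \<Rightarrow> 'v) \<Rightarrow> bool" where
  "usc V phi \<longleftrightarrow> (\<forall>s. bij_betw (\<lambda>x e. if 0 < e then phi s (shift_pt s e) x else 0)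
                                   (V s) (usc_limit V phi s))"

definition interleaving :: "('k::field \<Rightarrow> 'v::ab_group_add \<Rightarrow> 'v) \<Rightarrow> (real^'n \<Rightarrow> 'v set)
    \<Rightarrow> (real^'n \<Rightarrow> real^'n \<Rightarrow> 'v \<Rightarrow> 'v)
    \<Rightarrow> ('k \<Rightarrow> 'w::ab_group_add \<Rightarrow> 'w) \<Rightarrow> (real^'n \<Rightarrow> 'w set)
    \<Rightarrow> (real^'n \<Rightarrow> real^'n \<Rightarrow> 'w \<Rightarrow> 'w) \<Rightarrow> real
    \<Rightarrow> (real^'n \<Rightarrow> 'v \<Rightarrow> 'w) \<Rightarrow> (real^'n \<Rightarrow> 'w \<Rightarrow> 'v) \<Rightarrow> bool" where
  "interleaving sc V phi sc' W psi e f g \<longleftrightarrow>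
     pmod_hom sc V phi sc' (shift_sp W e) (shift_map psi e) f \<and>
     pmod_hom sc' W psi sc (shift_sp V e) (shift_map phi e) g \<and>
     (\<forall>s. \<forall>x\<in>V s. g (shift_pt s e) (f s x) = phi s (shift_pt s (2 * e)) x) \<and>
     (\<forall>s. \<forall>y\<in>W s. f (shift_pt s e) (g s y) = psi s (shift_pt s (2 * e)) y)"

text \<open>interleaving distance (infimum over e >= 0; infinity if no interleaving exists)\<close>
definition d_I :: "('k::field \<Rightarrow> 'v::ab_group_add \<Rightarrow> 'v) \<Rightarrow> (real^'n \<Rightarrow> 'v set)
    \<Rightarrow> (real^'n \<Rightarrow> real^'n \<Rightarrow> 'v \<Rightarrow> 'v)
    \<Rightarrow> ('k \<Rightarrow> 'w::ab_group_add \<Rightarrow> 'w) \<Rightarrow> (real^'n \<Rightarrow> 'w set)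
    \<Rightarrow> (real^'n \<Rightarrow> real^'n \<Rightarrow> 'w \<Rightarrow> 'w) \<Rightarrow> ereal" where
  "d_I sc V phi sc' W psi =
     Inf {ereal e | e. 0 \<le> e \<and> (\<exists>f g. interleaving sc V phi sc' W psi e f g)}"

definition grid_floor :: "real \<Rightarrow> real^'n \<Rightarrow> real^'n" where
  "grid_floor e s = (\<chi> i. e * of_int \<lfloor>s $ i / e\<rfloor>)"

text \<open>restriction-extension V_Q for Q = (e Z)^n\<close>
definition grid_sp :: "(real^'n \<Rightarrow> 'v set) \<Rightarrow> real \<Rightarrow> real^'n \<Rightarrow> 'v set" where
  "grid_sp V e s = V (grid_floor e s)"

definition grid_map :: "(real^'n \<Rightarrow> real^'n \<Rightarrow> 'v \<Rightarrow> 'v) \<Rightarrow> real \<Rightarrow> real^'n \<Rightarrow> real^'n \<Rightarrow> 'v \<Rightarrow> 'v" where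
  "grid_map phi e s t = phi (grid_floor e s) (grid_floor e t)"

definition reg_lfp :: "('k::field \<Rightarrow> 'v::ab_group_add \<Rightarrow> 'v) \<Rightarrow> (real^'n \<Rightarrow> 'v set)
    \<Rightarrow> (real^'n \<Rightarrow> real^'n \<Rightarrow> 'v \<Rightarrow> 'v) \<Rightarrow> bool" where
  "reg_lfp sc V phi \<longleftrightarrow> q_tame sc V phi \<and> usc V phi \<and> pw_fin_dim sc V \<and>
     (\<exists>e>0. pmod_iso sc V phi sc (grid_sp V e) (grid_map phi e))"

end

theory Submission imports Defs begin

text \<open>Round down to the grid (\<epsilon>Z)^n with \<epsilon> = \<delta>/2, writing \<lfloor>s\<rfloor> for the grid point below s,
  and take W_s = im(V_{\<lfloor>s\<rfloor>, \<lfloor>s\<rfloor>+\<epsilon>}) \<subseteq> V_{\<lfloor>s\<rfloor>+\<epsilon>}, with the structure maps of V between the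
  points \<lfloor>s\<rfloor>+\<epsilon>. Since \<lfloor>s\<rfloor> \<lless> \<lfloor>s\<rfloor>+\<epsilon>, q-tameness of V makes W q-tame and pointwise
  finite-dimensional. W depends on s only through \<lfloor>s\<rfloor>, which is constant on half-open grid cells,
  so W is upper semicontinuous and equal to its restriction-extension W_Q. Finally
  \<lfloor>s\<rfloor> \<le> s \<le> \<lfloor>s+\<epsilon>\<rfloor> and \<lfloor>s\<rfloor>+\<epsilon> \<le> s+\<epsilon>, so structure maps of V form an \<epsilon>-interleaving of V and W.\<close>

lemma pmod_subspace: "pmod sc V phi \<Longrightarrow> module.subspace sc (V s)"
  unfolding pmod_def by blast

lemma pmod_lin_on: "pmod sc V phi \<Longrightarrow> s \<le> t \<Longrightarrow> lin_on sc sc (V s) (phi s t)"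
  unfolding pmod_def by blast

lemma pmod_mapsto: "pmod sc V phi \<Longrightarrow> s \<le> t \<Longrightarrow> x \<in> V s \<Longrightarrow> phi s t x \<in> V t"
  unfolding pmod_def by blast

lemma pmod_id: "pmod sc V phi \<Longrightarrow> x \<in> V s \<Longrightarrow> phi s s x = x"
  unfolding pmod_def by blast

lemma pmod_comp:
  "pmod sc V phi \<Longrightarrow> s \<le> t \<Longrightarrow> t \<le> u \<Longrightarrow> x \<in> V s \<Longrightarrow> phi t u (phi s t x) = phi s u x"
  unfolding pmod_def by blast

lemma lin_on_subset: "lin_on sc sc' S f \<Longrightarrow> T \<subseteq> S \<Longrightarrow> lin_on sc sc' T f"
  unfolding lin_on_def by blast

lemma subspace_image_lin_on:
  assumes "module sc" "module sc'" "module.subspace sc S" "lin_on sc sc' S f"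
  shows "module.subspace sc' (f ` S)"
proof -
  have add: "f (x + y) = f x + f y" and scale: "f (sc c x) = sc' c (f x)"
    if "x \<in> S" "y \<in> S" for x y c
    using assms(4) that unfolding lin_on_def by auto
  have "0 \<in> S"
    using module.subspace_0[OF assms(1,3)] .
  then have "f 0 = 0"
    using add[of 0 0] by simp
  then show ?thesis
    using \<open>0 \<in> S\<close> module.subspace_add[OF assms(1,3)] module.subspace_scale[OF assms(1,3)]
    by (intro module.subspaceI[OF assms(2)]) (auto simp flip: add scale)
qed

lemma pmod_iso_refl: "pmod_iso sc V phi sc V phi"
  unfolding pmod_iso_def pmod_hom_def lin_on_def
  by (intro exI[of _ "\<lambda>s x. x"]) (auto simp: bij_betw_def)

lemma d_I_le_interleaving:
  "0 \<le> e \<Longrightarrow> interleaving sc V phi sc' W psi e f g \<Longrightarrow> d_I sc V phi sc' W psi \<le> ereal e"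
  unfolding d_I_def by (intro Inf_lower) blast

lemma shift_pt_nth [simp]: "shift_pt s a $ i = s $ i + a"
  by (simp add: shift_pt_def)

lemma shift_pt_twice: "shift_pt (shift_pt s a) a = shift_pt s (2 * a)"
  by (simp add: vec_eq_iff)

lemma shift_pt_mono: "s \<le> t \<Longrightarrow> shift_pt s a \<le> shift_pt t a"
  by (simp add: less_eq_vec_def)

lemma shift_pt_le_shift_pt: "a \<le> b \<Longrightarrow> shift_pt s a \<le> shift_pt s b"
  by (simp add: less_eq_vec_def)

lemma le_shift_pt: "0 \<le> a \<Longrightarrow> s \<le> shift_pt s a"
  by (simp add: less_eq_vec_def)

lemma ll_shift_pt: "0 < a \<Longrightarrow> s \<le> t \<Longrightarrow> ll s (shift_pt t a)"
  unfolding ll_def less_eq_vec_def by (metis add.right_neutral add_le_less_mono shift_pt_nth)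

subsection \<open>Upper semicontinuity\<close>

lemma canonical_map_in_usc_limit:
  assumes "pmod sc V phi" "x \<in> V s"
  shows "(\<lambda>e. if 0 < e then phi s (shift_pt s e) x else 0) \<in> usc_limit V phi s"
  unfolding usc_limit_def
  using pmod_mapsto[OF assms(1) le_shift_pt assms(2)]
    pmod_comp[OF assms(1) le_shift_pt shift_pt_le_shift_pt assms(2)]
  by auto

lemma usc_limit_eq_canonical_map_if_const:
  assumes pm: "pmod sc V phi" and z: "z \<in> usc_limit V phi s"
    and const: "\<And>a. 0 < a \<Longrightarrow> a < d \<Longrightarrow>
                  V (shift_pt s a) = V s \<and> (\<forall>x\<in>V s. phi s (shift_pt s a) x = x)"
    and c: "0 < c" "c < d"
  shows "z = (\<lambda>e. if 0 < e then phi s (shift_pt s e) (z c) else 0)"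
proof
  fix e :: real
  have z0: "\<And>e. e \<le> 0 \<Longrightarrow> z e = 0"
    and zV: "\<And>e. 0 < e \<Longrightarrow> z e \<in> V (shift_pt s e)"
    and zc: "\<And>e e'. 0 < e \<Longrightarrow> e \<le> e' \<Longrightarrow> phi (shift_pt s e) (shift_pt s e') (z e) = z e'"
    using z unfolding usc_limit_def by auto
  have zc_in: "z c \<in> V s"
    using zV[OF c(1)] const[OF c] by simp
  consider "e \<le> 0" | "c \<le> e" | "0 < e" "e < c"
    by linarith
  then show "z e = (if 0 < e then phi s (shift_pt s e) (z c) else 0)"
  proof cases
    case 1
    then show ?thesis by (simp add: z0)
  next
    case 2
    have "z e = phi (shift_pt s c) (shift_pt s e) (phi s (shift_pt s c) (z c))"
      using zc[OF c(1) 2] const[OF c] zc_in by simp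
    also have "\<dots> = phi s (shift_pt s e) (z c)"
      using pmod_comp[OF pm le_shift_pt shift_pt_le_shift_pt[OF 2] zc_in] c by simp
    finally show ?thesis
      using c 2 by simp
  next
    case 3
    have ze: "z e \<in> V s"
      using zV[OF 3(1)] const[OF 3(1)] 3(2) c by simp
    have "z c = phi (shift_pt s e) (shift_pt s c) (phi s (shift_pt s e) (z e))"
      using zc[OF 3(1)] 3(2) const[OF 3(1)] c ze by simp
    also have "\<dots> = z e"
      using pmod_comp[OF pm le_shift_pt shift_pt_le_shift_pt ze] 3 const[OF c] ze by simp
    finally show ?thesis
      using 3 const[OF 3(1)] c zc_in by simp
  qed
qed

lemma usc_if_eventually_const:
  assumes pm: "pmod sc V phi"
    and const: "\<And>s. \<forall>\<^sub>F a in at_right 0.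
                   V (shift_pt s a) = V s \<and> (\<forall>x\<in>V s. phi s (shift_pt s a) x = x)"
  shows "usc V phi"
  unfolding usc_def
proof
  fix s
  define F where "F x = (\<lambda>e. if 0 < e then phi s (shift_pt s e) x else 0)" for x
  obtain d where "d > 0" and d: "\<And>a. 0 < a \<Longrightarrow> a < d \<Longrightarrow>
      V (shift_pt s a) = V s \<and> (\<forall>x\<in>V s. phi s (shift_pt s a) x = x)"
    using const[of s] unfolding eventually_at_right_field by auto
  define c where "c = d / 2"
  have c: "0 < c" "c < d"
    using \<open>d > 0\<close> by (auto simp: c_def)
  have "inj_on F (V s)"
    by (rule inj_on_inverseI[of _ "\<lambda>z. z c"]) (use d[OF c] c in \<open>simp add: F_def\<close>)
  moreover have "F ` V s \<subseteq> usc_limit V phi s"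
    using canonical_map_in_usc_limit[OF pm] by (auto simp: F_def)
  moreover have "z \<in> F ` V s" if "z \<in> usc_limit V phi s" for z
  proof
    show "z = F (z c)"
      unfolding F_def using usc_limit_eq_canonical_map_if_const[OF pm that d c] .
    show "z c \<in> V s"
      using that d[OF c] c unfolding usc_limit_def by auto
  qed
  ultimately show "bij_betw (\<lambda>x e. if 0 < e then phi s (shift_pt s e) x else 0)
      (V s) (usc_limit V phi s)"
    unfolding bij_betw_def F_def[symmetric] by blast
qed

subsection \<open>Images of reindexed structure maps\<close>

text \<open>For monotone G \<le> P, image_sp V phi G P with the maps reindex_map phi P is the image of
  the morphism V \<circ> G \<Rightarrow> V \<circ> P given by the structure maps V_{G s, P s}.\<close>

definition image_sp :: "(real^'n \<Rightarrow> 'v set) \<Rightarrow> (real^'n \<Rightarrow> real^'n \<Rightarrow> 'v \<Rightarrow> 'v)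
    \<Rightarrow> (real^'n \<Rightarrow> real^'n) \<Rightarrow> (real^'n \<Rightarrow> real^'n) \<Rightarrow> real^'n \<Rightarrow> 'v set" where
  "image_sp V phi G P s = phi (G s) (P s) ` V (G s)"

definition reindex_map :: "(real^'n \<Rightarrow> real^'n \<Rightarrow> 'v \<Rightarrow> 'v) \<Rightarrow> (real^'n \<Rightarrow> real^'n)
    \<Rightarrow> real^'n \<Rightarrow> real^'n \<Rightarrow> 'v \<Rightarrow> 'v" where
  "reindex_map phi P s t = phi (P s) (P t)"

locale pmod_image =
  fixes sc :: "'k::field \<Rightarrow> 'v::ab_group_add \<Rightarrow> 'v"
    and V :: "real^'n \<Rightarrow> 'v set"
    and phi :: "real^'n \<Rightarrow> real^'n \<Rightarrow> 'v \<Rightarrow> 'v"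
    and G P :: "real^'n \<Rightarrow> real^'n"
  assumes vector_space: "vector_space sc"
    and pmod: "pmod sc V phi"
    and mono_G: "mono G"
    and mono_P: "mono P"
    and G_le_P: "G s \<le> P s"
begin

abbreviation W :: "real^'n \<Rightarrow> 'v set" where
  "W \<equiv> image_sp V phi G P"

abbreviation psi :: "real^'n \<Rightarrow> real^'n \<Rightarrow> 'v \<Rightarrow> 'v" where
  "psi \<equiv> reindex_map phi P"

lemma image_sp_subset: "W s \<subseteq> V (P s)"
  unfolding image_sp_def using pmod_mapsto[OF pmod G_le_P] by blast

lemma image_of_image_sp:
  assumes "s \<le> t"
  shows "psi s t ` W s = phi (G s) (P t) ` V (G s)"
  unfolding image_sp_def reindex_map_def image_image
  using pmod_comp[OF pmod G_le_P monoD[OF mono_P assms]] by (auto intro!: image_cong)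

lemma image_sp_mapsto:
  assumes "s \<le> t"
  shows "psi s t ` W s \<subseteq> W t"
proof -
  have "phi (G s) (P t) x = phi (G t) (P t) (phi (G s) (G t) x)" if "x \<in> V (G s)" for x
    using pmod_comp[OF pmod monoD[OF mono_G assms] G_le_P that] by simp
  then have "phi (G s) (P t) ` V (G s) \<subseteq> W t"
    unfolding image_sp_def using pmod_mapsto[OF pmod monoD[OF mono_G assms]] by blast
  then show ?thesis
    using image_of_image_sp[OF assms] by simp
qed

lemma pmod_image: "pmod sc W psi"
  unfolding pmod_def
proof (intro conjI allI impI ballI)
  fix s
  have "module sc"
    using vector_space by (simp add: module_iff_vector_space)
  then show "module.subspace sc (W s)"
    unfolding image_sp_def
    using subspace_image_lin_on pmod_subspace[OF pmod] pmod_lin_on[OF pmod G_le_P] by blast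
next
  fix s t :: "real^'n"
  assume "s \<le> t"
  show "lin_on sc sc (W s) (psi s t)"
    unfolding reindex_map_def
    using lin_on_subset[OF pmod_lin_on[OF pmod monoD[OF mono_P \<open>s \<le> t\<close>]] image_sp_subset] .
  show "psi s t ` W s \<subseteq> W t"
    using image_sp_mapsto[OF \<open>s \<le> t\<close>] .
next
  fix s y
  assume "y \<in> W s"
  then show "psi s s y = y"
    unfolding reindex_map_def using pmod_id[OF pmod] image_sp_subset by blast
next
  fix s t u y
  assume "s \<le> t" "t \<le> u" "y \<in> W s"
  then show "psi t u (psi s t y) = psi s u y"
    unfolding reindex_map_def
    using pmod_comp[OF pmod monoD[OF mono_P] monoD[OF mono_P]] image_sp_subset by blast
qed

lemma q_tame_image:
  assumes "q_tame sc V phi" and "\<And>s t. s \<le> t \<Longrightarrow> ll (G s) (P t)"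
  shows "q_tame sc W psi"
  unfolding q_tame_def
proof (intro allI impI)
  fix s t :: "real^'n"
  assume "ll s t"
  then have "s \<le> t"
    by (auto simp: ll_def less_eq_vec_def less_imp_le)
  then show "fin_dim sc (psi s t ` W s)"
    using assms unfolding image_of_image_sp[OF \<open>s \<le> t\<close>] q_tame_def by blast
qed

lemma pw_fin_dim_image:
  assumes "q_tame sc V phi" and "\<And>s. ll (G s) (P s)"
  shows "pw_fin_dim sc W"
  using assms unfolding pw_fin_dim_def image_sp_def q_tame_def by blast

lemma usc_image:
  assumes "\<And>s. \<forall>\<^sub>F a in at_right 0. G (shift_pt s a) = G s \<and> P (shift_pt s a) = P s"
  shows "usc W psi"
proof (rule usc_if_eventually_const[OF pmod_image])
  fix s :: "real^'n"
  show "\<forall>\<^sub>F a in at_right 0. W (shift_pt s a) = W s \<and> (\<forall>x\<in>W s. psi s (shift_pt s a) x = x)"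
  proof (rule eventually_mono[OF assms[of s]])
    fix a
    assume a: "G (shift_pt s a) = G s \<and> P (shift_pt s a) = P s"
    then have "W (shift_pt s a) = W s"
      by (simp add: image_sp_def)
    moreover have "psi s (shift_pt s a) x = x" if "x \<in> W s" for x
      using a pmod_id[OF pmod] image_sp_subset that by (auto simp: reindex_map_def)
    ultimately show "W (shift_pt s a) = W s \<and> (\<forall>x\<in>W s. psi s (shift_pt s a) x = x)"
      by blast
  qed
qed

lemma interleaving_image:
  assumes le_G_shift: "\<And>s. s \<le> G (shift_pt s e)" and P_le_shift: "\<And>s. P s \<le> shift_pt s e"
  shows "interleaving sc V phi sc W psi e
           (\<lambda>s. phi s (P (shift_pt s e))) (\<lambda>s. phi (P s) (shift_pt s e))"
    (is "interleaving _ _ _ _ _ _ _ ?f ?g")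
proof -
  have le_P: "s \<le> P (shift_pt s e)" for s
    using order_trans[OF le_G_shift G_le_P] .
  have P_mono: "P s \<le> P t" if "s \<le> t" for s t
    using monoD[OF mono_P that] .
  have in_V: "y \<in> V (P s)" if "y \<in> W s" for s y
    using image_sp_subset that by blast
  have "?f s x \<in> W (shift_pt s e)" if "x \<in> V s" for s x
    using pmod_comp[OF pmod le_G_shift G_le_P that] pmod_mapsto[OF pmod le_G_shift that]
    unfolding image_sp_def by (metis image_eqI)
  moreover have "?f t (phi s t x) = shift_map psi e s t (?f s x)" if "s \<le> t" "x \<in> V s" for s t x
    using pmod_comp[OF pmod that(1) le_P that(2)]
      pmod_comp[OF pmod le_P P_mono[OF shift_pt_mono[OF that(1)]] that(2)]
    by (simp add: shift_map_def reindex_map_def)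
  moreover have "?g t (psi s t y) = shift_map phi e s t (?g s y)" if "s \<le> t" "y \<in> W s" for s t y
    using pmod_comp[OF pmod P_mono[OF that(1)] P_le_shift in_V[OF that(2)]]
      pmod_comp[OF pmod P_le_shift shift_pt_mono[OF that(1)] in_V[OF that(2)]]
    by (simp add: shift_map_def reindex_map_def)
  moreover have "?g (shift_pt s e) (?f s x) = phi s (shift_pt s (2 * e)) x" if "x \<in> V s" for s x
    using pmod_comp[OF pmod le_P P_le_shift that] by (simp add: shift_pt_twice)
  moreover have "?f (shift_pt s e) (?g s y) = psi s (shift_pt s (2 * e)) y" if "y \<in> W s" for s y
    using pmod_comp[OF pmod P_le_shift le_P in_V[OF that]]
    by (simp add: shift_pt_twice reindex_map_def)
  moreover have "lin_on sc sc (V s) (?f s)" for s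
    using pmod_lin_on[OF pmod le_P] .
  moreover have "lin_on sc sc (W s) (?g s)" for s
    using lin_on_subset[OF pmod_lin_on[OF pmod P_le_shift] image_sp_subset] .
  moreover have "?g s y \<in> V (shift_pt s e)" if "y \<in> W s" for s y
    using pmod_mapsto[OF pmod P_le_shift in_V[OF that]] .
  ultimately show ?thesis
    unfolding interleaving_def pmod_hom_def shift_sp_def by (intro conjI allI impI ballI subsetI) auto
qed

end

subsection \<open>Rounding to a regular grid\<close>

definition grid_succ :: "real \<Rightarrow> real^'n \<Rightarrow> real^'n" where
  "grid_succ e s = shift_pt (grid_floor e s) e"

lemma grid_floor_nth [simp]: "grid_floor e s $ i = e * of_int \<lfloor>s $ i / e\<rfloor>"
  by (simp add: grid_floor_def)

lemma grid_floor_idem [simp]: "grid_floor e (grid_floor e s) = grid_floor e s"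
  by (cases "e = 0") (simp_all add: vec_eq_iff)

lemma grid_floor_le:
  assumes "0 < e"
  shows "grid_floor e s \<le> s"
  unfolding less_eq_vec_def
proof
  fix i
  have "of_int \<lfloor>s $ i / e\<rfloor> \<le> s $ i / e"
    by (rule of_int_floor_le)
  with assms show "grid_floor e s $ i \<le> s $ i"
    by (simp add: le_divide_eq mult.commute)
qed

lemma le_grid_floor_shift:
  assumes "0 < e"
  shows "s \<le> grid_floor e (shift_pt s e)"
  unfolding less_eq_vec_def
proof
  fix i
  have "(s $ i + e) / e - 1 < of_int \<lfloor>(s $ i + e) / e\<rfloor>"
    by linarith
  with assms show "s $ i \<le> grid_floor e (shift_pt s e) $ i"
    by (simp add: field_simps)
qed

lemma mono_grid_floor: "0 < e \<Longrightarrow> mono (grid_floor e)"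
  by (auto intro!: monoI simp: less_eq_vec_def floor_mono divide_right_mono)

lemma grid_floor_shift_eventually_eq:
  assumes "0 < e"
  shows "\<forall>\<^sub>F a in at_right 0. grid_floor e (shift_pt s a) = grid_floor e s"
proof -
  have "\<forall>\<^sub>F a in at_right 0. \<lfloor>(s $ i + a) / e\<rfloor> = \<lfloor>s $ i / e\<rfloor>" for i
    unfolding eventually_at_right_field
  proof (intro exI conjI allI impI)
    define k where "k = \<lfloor>s $ i / e\<rfloor>"
    have k: "of_int k \<le> s $ i / e" "s $ i / e < of_int k + 1"
      unfolding k_def by linarith+
    with assms show "0 < e * (of_int k + 1) - s $ i"
      by (simp add: field_simps)
    fix a :: real
    assume "0 < a" "a < e * (of_int k + 1) - s $ i"
    with k assms have "of_int k \<le> (s $ i + a) / e" "(s $ i + a) / e < of_int k + 1"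
      by (simp_all add: field_simps)
    then show "\<lfloor>(s $ i + a) / e\<rfloor> = \<lfloor>s $ i / e\<rfloor>"
      unfolding k_def[symmetric] by linarith
  qed
  then have "\<forall>\<^sub>F a in at_right 0. \<forall>i. \<lfloor>(s $ i + a) / e\<rfloor> = \<lfloor>s $ i / e\<rfloor>"
    by (rule eventually_all_finite)
  then show ?thesis
    by (rule eventually_mono) (simp add: vec_eq_iff)
qed

lemma grid_succ_shift_eventually_eq:
  "0 < e \<Longrightarrow> \<forall>\<^sub>F a in at_right 0. grid_succ e (shift_pt s a) = grid_succ e s"
  unfolding grid_succ_def by (rule eventually_mono[OF grid_floor_shift_eventually_eq[of e s]]) simp_all

lemma mono_grid_succ: "0 < e \<Longrightarrow> mono (grid_succ e)"
  unfolding grid_succ_def using mono_grid_floor by (auto intro!: monoI shift_pt_mono dest: monoD)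

lemma grid_floor_le_grid_succ: "0 \<le> e \<Longrightarrow> grid_floor e s \<le> grid_succ e s"
  unfolding grid_succ_def by (rule le_shift_pt)

lemma grid_succ_le_shift: "0 < e \<Longrightarrow> grid_succ e s \<le> shift_pt s e"
  unfolding grid_succ_def by (intro shift_pt_mono grid_floor_le)

lemma ll_grid_floor_grid_succ: "0 < e \<Longrightarrow> s \<le> t \<Longrightarrow> ll (grid_floor e s) (grid_succ e t)"
  unfolding grid_succ_def by (intro ll_shift_pt) (auto dest: monoD[OF mono_grid_floor])

lemma grid_sp_image_sp:
  "grid_sp (image_sp V phi (grid_floor e) (grid_succ e)) e = image_sp V phi (grid_floor e) (grid_succ e)"
  by (simp add: fun_eq_iff grid_sp_def image_sp_def grid_succ_def)

lemma grid_map_reindex_map: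
  "grid_map (reindex_map phi (grid_succ e)) e = reindex_map phi (grid_succ e)"
  by (simp add: fun_eq_iff grid_map_def reindex_map_def grid_succ_def)

theorem lemma4p22:
  fixes sc :: "'k::field \<Rightarrow> 'v::ab_group_add \<Rightarrow> 'v"
    and V :: "real^'n \<Rightarrow> 'v set"
    and phi :: "real^'n \<Rightarrow> real^'n \<Rightarrow> 'v \<Rightarrow> 'v"
    and delta :: real
  assumes "vector_space sc"
    and "pmod sc V phi"
    and "q_tame sc V phi"
    and "usc V phi"
    and "delta > 0"
  shows "\<exists>W psi. pmod sc W psi \<and> reg_lfp sc W psi \<and> d_I sc V phi sc W psi < ereal delta"
proof -
  define e where "e = delta / 2"
  have e: "0 < e" "e < delta"
    using \<open>delta > 0\<close> by (simp_all add: e_def)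
  interpret pmod_image sc V phi "grid_floor e" "grid_succ e"
    using assms(1,2) e(1)
    by (intro pmod_image.intro) (simp_all add: mono_grid_floor mono_grid_succ grid_floor_le_grid_succ)
  have "usc W psi"
    using grid_floor_shift_eventually_eq[OF e(1)] grid_succ_shift_eventually_eq[OF e(1)]
    by (intro usc_image eventually_conj)
  moreover have "pmod_iso sc W psi sc (grid_sp W e) (grid_map psi e)"
    unfolding grid_sp_image_sp grid_map_reindex_map by (rule pmod_iso_refl)
  ultimately have "reg_lfp sc W psi"
    unfolding reg_lfp_def
    using e(1) q_tame_image[OF assms(3)] pw_fin_dim_image[OF assms(3)]
      ll_grid_floor_grid_succ[OF e(1)]
    by blast
  have "d_I sc V phi sc W psi \<le> ereal e"
    using e(1) by (intro d_I_le_interleaving[OF _ interleaving_image]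
                     le_grid_floor_shift grid_succ_le_shift) simp_all
  also have "\<dots> < ereal delta"
    using e(2) by simp
  finally show ?thesis
    using pmod_image \<open>reg_lfp sc W psi\<close> by blast
qed

end
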